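(* Let $\Delta$ be a simplicial complex of subsets of $\{1,\dots,n\}$ and let $\mathcal L$ be the intersection of the facets (maximal faces) of $\Delta$. If $f$ is any binomial of degree $s$ in $Q_\Delta$, then $L_{\mathcal L}^s\cdot\tau_\Delta(f)\subseteq I_\Delta$, i.e. $\tau_\Delta(f)\in(I_\Delta:L_{\mathcal L}^s)$. In particular, $\tau_\Delta(Q_\Delta)\subseteq(I_\Delta:x_{+,\dots,+}^\infty)$.
   Context: $\mathbb K$ is a field, $a_1,\dots,a_n$ positive integers, $R=\mathbb K[x_{i_1,\dots,i_n}:1\le i_j\le a_j]$, $A=(x_{i_1,\dots,i_n})$ the generic table. For a tuple $\sigma$ with $\sigma_j\in\{1,\dots,a_j\}\cup\{+\}$, $x_\sigma$ is the sum of all $x_{i_1,\dots,i_n}$ with $i_j=\sigma_j$ whenever $\sigma_j\ne+$; $x_{+,\dots,+}$ is the sum of all variables. For $\mathscr J=\{j_1<\dots<j_m\}\subseteq\{1,\dots,n\}$, the margin $A_{\mathscr J}$ is the table whose $(i_1,\dots,i_m)$ entry is $x_\sigma$ with $\sigma_{j_r}=i_r$ and $\sigma_j=+$ for $j\notin\mathscr J$; $L_{\mathscr J}\subseteq R$ is the ideal generated by the entries of $A_{\mathscr J}$. For a table $B$ with entries in $R$, $I(B)$ is the ideal generated by all generalized $2\times2$ minors of $B$ (determinants $\det\begin{pmatrix} b_{i} & b_{j_1,\dots,i_l,\dots,j_m}\\ b_{i_1,\dots,j_l,\dots,i_m} & b_{j}\end{pmatrix}$ interchanging one coordinate $l$),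 and $I_\Delta=\sum_{\mathscr J\in\Delta}I(A_{\mathscr J})$. $S_\Delta$ is the polynomial ring over $\mathbb K$ in variables $X_\sigma$ for tuples $\sigma$ with $\sigma_j\in\{1,\dots,a_j\}\cup\{\bullet\}$ and $\{j:\sigma_j\ne\bullet\}\in\Delta$. $\tau_\Delta:S_\Delta\to R$ sends $X_\sigma\mapsto x_{\sigma''}$ ($\bullet$ replaced by $+$). $\eta_\Delta:S_\Delta\to\mathbb K[y_{j,i}:1\le j\le n,\ i\in\{1,\dots,a_j\}\cup\{\bullet\}]$ (the $y_{j,\bullet}$ independent variables) sends $X_\sigma\mapsto\prod_j y_{j,\sigma_j}$, and $Q_\Delta=\ker\eta_\Delta$. *)

theory Defs
  imports "HOL-Library.Poly_Mapping"
begin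

type_synonym ('v, 'k) mpoly = "('v \<Rightarrow>\<^sub>0 nat) \<Rightarrow>\<^sub>0 'k"

definition Var :: "'v \<Rightarrow> ('v, 'k::comm_semiring_1) mpoly" where
  "Var v = Poly_Mapping.single (Poly_Mapping.single v 1) 1"

definition vars :: "('v, 'k::zero) mpoly \<Rightarrow> 'v set" where
  "vars p = (\<Union>m\<in>Poly_Mapping.keys p. Poly_Mapping.keys (m :: 'v \<Rightarrow>\<^sub>0 nat))"

definition mdeg :: "('v \<Rightarrow>\<^sub>0 nat) \<Rightarrow> nat" where
  "mdeg m = (\<Sum>v\<in>Poly_Mapping.keys m. Poly_Mapping.lookup m v)"

definition subst :: "('v \<Rightarrow> ('w, 'k::comm_semiring_1) mpoly) \<Rightarrow> ('v, 'k) mpoly \<Rightarrow> ('w, 'k) mpoly" where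
  "subst \<phi> p = (\<Sum>m\<in>Poly_Mapping.keys p. Poly_Mapping.single 0 (Poly_Mapping.lookup p m) * (\<Prod>v\<in>Poly_Mapping.keys m. \<phi> v ^ Poly_Mapping.lookup m v))"

definition ideal_gen :: "'a::comm_ring_1 set \<Rightarrow> 'a set" where
  "ideal_gen G = {p. \<exists>F r. finite F \<and> F \<subseteq> G \<and> p = (\<Sum>g\<in>F. r g * g)}"

definition ideal_pow :: "'a::comm_ring_1 set \<Rightarrow> nat \<Rightarrow> 'a set" where
  "ideal_pow I s = ideal_gen {prod_list xs | xs. length xs = s \<and> set xs \<subseteq> I}"

definition ideal_quot :: "'a::comm_ring_1 set \<Rightarrow> 'a set \<Rightarrow> 'a set" where
  "ideal_quot I J = {f. \<forall>g\<in>J. g * f \<in> I}"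

definition saturation :: "'a::comm_ring_1 set \<Rightarrow> 'a \<Rightarrow> 'a set" where
  "saturation I x = {f. \<exists>k. x ^ k * f \<in> I}"

definition simplicial_complex :: "nat \<Rightarrow> nat set set \<Rightarrow> bool" where
  "simplicial_complex n \<Delta> \<longleftrightarrow> \<Delta> \<noteq> {} \<and> \<Delta> \<subseteq> Pow {1..n} \<and> (\<forall>F\<in>\<Delta>. \<forall>G. G \<subseteq> F \<longrightarrow> G \<in> \<Delta>)"

definition facets :: "nat set set \<Rightarrow> nat set set" where
  "facets \<Delta> = {F\<in>\<Delta>. \<forall>G\<in>\<Delta>. F \<subseteq> G \<longrightarrow> G = F}"

(* Tuples \<sigma> are functions nat \<Rightarrow> nat; the value 0 encodes the symbol + (resp. \<bullet>).
  cells a J: tuples with \<sigma> j \<in> {1..a j} for j \<in> J and \<sigma> j = 0 (i.e. +) otherwise.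
  The variables of R are the x_c for c \<in> cells a {1..n}. *)
definition cells :: "(nat \<Rightarrow> nat) \<Rightarrow> nat set \<Rightarrow> (nat \<Rightarrow> nat) set" where
  "cells a J = {\<sigma>. \<forall>j. (j \<in> J \<longrightarrow> \<sigma> j \<in> {1..a j}) \<and> (j \<notin> J \<longrightarrow> \<sigma> j = 0)}"

definition xsum :: "nat \<Rightarrow> (nat \<Rightarrow> nat) \<Rightarrow> (nat \<Rightarrow> nat) \<Rightarrow> (nat \<Rightarrow> nat, 'k::comm_semiring_1) mpoly" where
  "xsum n a \<sigma> = (\<Sum>c\<in>{c\<in>cells a {1..n}. \<forall>j. \<sigma> j \<noteq> 0 \<longrightarrow> c j = \<sigma> j}. Var c)"

definition margin_ideal :: "nat \<Rightarrow> (nat \<Rightarrow> nat) \<Rightarrow> nat set \<Rightarrow> (nat \<Rightarrow> nat, 'k::comm_ring_1) mpoly set" where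
  "margin_ideal n a J = ideal_gen (xsum n a ` cells a J)"

definition minors_ideal :: "(nat \<Rightarrow> nat) \<Rightarrow> nat set \<Rightarrow> ((nat \<Rightarrow> nat) \<Rightarrow> 'r::comm_ring_1) \<Rightarrow> 'r set" where
  "minors_ideal a J B = ideal_gen {B i * B j - B (j(l := i l)) * B (i(l := j l)) | i j l.
       i \<in> cells a J \<and> j \<in> cells a J \<and> l \<in> J}"

(* I_\<Delta> = sum over J \<in> \<Delta> of I(A_J); the sum of ideals is the ideal generated by their union. *)
definition I_Delta :: "nat \<Rightarrow> (nat \<Rightarrow> nat) \<Rightarrow> nat set set \<Rightarrow> (nat \<Rightarrow> nat, 'k::comm_ring_1) mpoly set" where
  "I_Delta n a \<Delta> = ideal_gen (\<Union>J\<in>\<Delta>. minors_ideal a J (xsum n a))"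

(* Variables X_\<sigma> of S_\<Delta> (0 encodes \<bullet>). *)
definition S_vars :: "(nat \<Rightarrow> nat) \<Rightarrow> nat set set \<Rightarrow> (nat \<Rightarrow> nat) set" where
  "S_vars a \<Delta> = (\<Union>J\<in>\<Delta>. cells a J)"

definition tau :: "nat \<Rightarrow> (nat \<Rightarrow> nat) \<Rightarrow> (nat \<Rightarrow> nat, 'k::comm_ring_1) mpoly \<Rightarrow> (nat \<Rightarrow> nat, 'k) mpoly" where
  "tau n a = subst (xsum n a)"

(* eta: X_\<sigma> \<mapsto> \<Prod>_j y_{j,\<sigma>_j}; variable y_{j,i} is (j,i), with i = 0 encoding \<bullet>. *)
definition eta :: "nat \<Rightarrow> (nat \<Rightarrow> nat, 'k::comm_ring_1) mpoly \<Rightarrow> (nat \<times> nat, 'k) mpoly" where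
  "eta n = subst (\<lambda>\<sigma>. \<Prod>j\<in>{1..n}. Var (j, \<sigma> j))"

definition Q_Delta :: "nat \<Rightarrow> (nat \<Rightarrow> nat) \<Rightarrow> nat set set \<Rightarrow> (nat \<Rightarrow> nat, 'k::comm_ring_1) mpoly set" where
  "Q_Delta n a \<Delta> = {f. vars f \<subseteq> S_vars a \<Delta> \<and> eta n f = 0}"

definition binomial_of_degree :: "nat \<Rightarrow> ('v, 'k::comm_ring_1) mpoly \<Rightarrow> bool" where
  "binomial_of_degree s f \<longleftrightarrow> (\<exists>\<alpha> \<beta> c d. f = Poly_Mapping.single \<alpha> c + Poly_Mapping.single \<beta> d
      \<and> mdeg \<alpha> = s \<and> mdeg \<beta> = s)"

end

theory Submission
  imports Defs "HOL.Modules" "HOL-Library.Multiset"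
begin

text \<open>Read a variable \<open>X\<^sub>\<sigma>\<close> of \<open>S\<^sub>\<Delta>\<close> as a row \<open>\<sigma>\<close> (a tuple supported on a face, with \<open>0\<close> for
  \<open>\<bullet>\<close>) and a monomial as a multiset of rows; \<open>\<tau>\<^sub>\<Delta>\<close> sends it to the product of the margin
  entries \<open>x\<^sub>\<sigma>\<close>. Exchanging one coordinate between two rows whose joint support is a face does
  not change this product modulo \<open>I\<^sub>\<Delta>\<close>: refined to cells of that face, the difference is a sum
  of generalized \<open>2\<times>2\<close> minors. A monomial of \<open>L\<^sub>\<L>\<^sup>s\<close> contributes \<open>s\<close> rows supported in the
  core \<open>\<L>\<close>, the intersection of the facets, and every face stays a face after adjoining \<open>\<L>\<close>.
  With a core row present, any exchange that keeps both rows on faces becomes a composite of three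
  admissible exchanges through the core row.

  A binomial \<open>X\<^sup>\<alpha> - X\<^sup>\<beta>\<close> lies in \<open>Q\<^sub>\<Delta>\<close> exactly when \<open>\<alpha>\<close> and \<open>\<beta>\<close> have the same entries column by
  column. Starting from the \<open>s\<close> core rows followed by the rows of \<open>\<alpha>\<close>, the rows of \<open>\<beta>\<close> are built
  one at a time in the positions of the core rows, pulling each entry out of a later row. While a
  row is filled, an untouched core row serves for the exchanges; for the last one, counting column
  entries shows that all remaining rows lie in a common face. Finally every element of \<open>Q\<^sub>\<Delta>\<close> is a
  sum of binomials of \<open>Q\<^sub>\<Delta>\<close>, and \<open>x\<^sub>+\<^sub>\<dots>\<^sub>+\<close> lies in \<open>L\<^sub>\<L>\<close>.\<close>

section \<open>Ideals as submodules\<close>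

interpretation ring_module: module "(*) :: 'a::comm_ring_1 \<Rightarrow> 'a \<Rightarrow> 'a"
  by unfold_locales (simp_all add: algebra_simps)

declare ring_module.scale_scale [simp del] \<comment> \<open>it reverses \<open>mult.assoc\<close> and loops with \<open>algebra_simps\<close>\<close>

lemma ideal_gen_eq_span: "ideal_gen G = ring_module.span G"
  unfolding ideal_gen_def ring_module.span_explicit by (auto simp: eq_commute)

lemma span_mult_mem:
  assumes I: "ring_module.subspace I" and G: "\<And>g. g \<in> G \<Longrightarrow> g * d \<in> I"
    and y: "y \<in> ring_module.span G"
  shows "y * d \<in> I"
  using y
proof (induction rule: ring_module.span_induct_alt)
  case base
  show ?case using ring_module.subspace_0[OF I] by simp
next
  case (step c g y)
  have "(c * g + y) * d = c * (g * d) + y * d" by (simp add: algebra_simps)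
  also have "\<dots> \<in> I"
    by (rule ring_module.subspace_add[OF I ring_module.subspace_scale[OF I]])
      (use G[OF step.hyps(1)] step.IH in simp_all)
  finally show ?case .
qed

lemma prod_list_span_mult_mem:
  assumes I: "ring_module.subspace I" and ys: "set ys \<subseteq> ring_module.span G"
    and gens: "\<And>hs. set hs \<subseteq> G \<Longrightarrow> length hs = length ys \<Longrightarrow> prod_list hs * d \<in> I"
  shows "prod_list ys * d \<in> I"
  using ys gens
proof (induction ys arbitrary: d)
  case Nil
  then show ?case using Nil.prems(2)[of "[]"] by simp
next
  case (Cons y ys)
  have y: "y \<in> ring_module.span G"
    using Cons.prems(1) by simp
  have "prod_list hs * (y * d) \<in> I" if hs: "set hs \<subseteq> G" "length hs = length ys" for hs
  proof -
    have "g * (prod_list hs * d) \<in> I" if "g \<in> G" for g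
      using Cons.prems(2)[of "g # hs"] that hs by (simp add: mult.assoc)
    then have "y * (prod_list hs * d) \<in> I"
      using span_mult_mem[OF I _ y] by blast
    then show ?thesis by (simp add: ac_simps)
  qed
  then have "prod_list ys * (y * d) \<in> I"
    using Cons.IH Cons.prems(1) by simp
  then show ?case by (simp add: ac_simps)
qed

lemma ideal_pow_mult_mem:
  assumes I: "ring_module.subspace I" and g: "g \<in> ideal_pow (ideal_gen G) k"
    and gens: "\<And>hs. set hs \<subseteq> G \<Longrightarrow> length hs = k \<Longrightarrow> prod_list hs * d \<in> I"
  shows "g * d \<in> I"
proof (rule span_mult_mem[OF I])
  show "g \<in> ring_module.span {prod_list ys |ys. length ys = k \<and> set ys \<subseteq> ideal_gen G}"
    using g by (simp add: ideal_pow_def ideal_gen_eq_span)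
next
  fix p assume "p \<in> {prod_list ys |ys. length ys = k \<and> set ys \<subseteq> ideal_gen G}"
  then obtain ys where "p = prod_list ys" "length ys = k" "set ys \<subseteq> ring_module.span G"
    by (auto simp: ideal_gen_eq_span)
  then show "p * d \<in> I"
    using prod_list_span_mult_mem[OF I, of ys G d] gens by simp
qed

lemma power_mem_ideal_pow: "x \<in> L \<Longrightarrow> x ^ k \<in> ideal_pow L k"
  unfolding ideal_pow_def ideal_gen_eq_span
  by (rule ring_module.span_base) (auto intro!: exI[of _ "replicate k x"] simp: prod_list_replicate)

section \<open>Substitution and the multiset of variables\<close>

definition var_mset :: "('v \<Rightarrow>\<^sub>0 nat) \<Rightarrow> 'v multiset" where
  "var_mset m = Abs_multiset (Poly_Mapping.lookup m)"

lemma count_var_mset [simp]: "count (var_mset m) = Poly_Mapping.lookup m"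
  unfolding var_mset_def by (rule count_Abs_multiset) (simp add: in_keys_iff[symmetric])

lemma set_mset_var_mset [simp]: "set_mset (var_mset m) = Poly_Mapping.keys m"
  by (auto simp: set_mset_def in_keys_iff)

lemma size_var_mset: "size (var_mset m) = mdeg m"
  by (simp add: size_multiset_overloaded_eq mdeg_def)

lemma prod_keys_power_eq_prod_mset:
  "(\<Prod>v\<in>Poly_Mapping.keys m. f v ^ Poly_Mapping.lookup m v) = (\<Prod>v\<in>#var_mset m. f v)"
  by (simp add: image_prod_mset_multiplicity)

lemma subst_eq_sum:
  assumes "finite A" "Poly_Mapping.keys p \<subseteq> A"
  shows "subst \<phi> p = (\<Sum>m\<in>A. Poly_Mapping.single 0 (Poly_Mapping.lookup p m) * (\<Prod>v\<in>#var_mset m. \<phi> v))"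
  unfolding subst_def prod_keys_power_eq_prod_mset
  by (rule sum.mono_neutral_left) (use assms in \<open>auto simp: in_keys_iff\<close>)

lemma subst_single:
  "subst \<phi> (Poly_Mapping.single m c) = Poly_Mapping.single 0 c * (\<Prod>v\<in>#var_mset m. \<phi> v)"
  by (subst subst_eq_sum[of "{m}"]) auto

lemma additive_subst: "additive (subst \<phi> :: ('v, 'k::comm_ring_1) mpoly \<Rightarrow> _)"
proof
  fix p q :: "('v, 'k) mpoly"
  let ?A = "Poly_Mapping.keys p \<union> Poly_Mapping.keys q"
  show "subst \<phi> (p + q) = subst \<phi> p + subst \<phi> q"
    using keys_add[of p q]
    by (simp add: subst_eq_sum[of ?A] lookup_add single_add distrib_right sum.distrib)
qed

section \<open>Margins and exchanges\<close>

lemma finite_cells: "finite J \<Longrightarrow> finite (cells a J)"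
proof -
  assume "finite J"
  have "cells a J \<subseteq> {f. \<forall>x. (x \<in> J \<longrightarrow> f x \<in> (\<Union>j\<in>J. {1..a j})) \<and> (x \<notin> J \<longrightarrow> f x = 0)}"
    unfolding cells_def by auto
  moreover have "finite {f. \<forall>x. (x \<in> J \<longrightarrow> f x \<in> (\<Union>j\<in>J. {1..a j})) \<and> (x \<notin> J \<longrightarrow> f x = (0::nat))}"
    by (rule finite_set_of_finite_funs) (use \<open>finite J\<close> in auto)
  ultimately show ?thesis by (rule finite_subset)
qed

definition supp :: "(nat \<Rightarrow> nat) \<Rightarrow> nat set" where
  "supp r = {j. r j \<noteq> 0}"

lemma supp_cells: "r \<in> cells a J \<Longrightarrow> supp r \<subseteq> J"
  unfolding cells_def supp_def by (metis (mono_tags, lifting) mem_Collect_eq subsetI)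

lemma supp_fun_upd: "supp (r(l := v)) \<subseteq> supp r \<union> {l}"
  by (auto simp: supp_def)

definition extensions :: "(nat \<Rightarrow> nat) \<Rightarrow> nat set \<Rightarrow> (nat \<Rightarrow> nat) \<Rightarrow> (nat \<Rightarrow> nat) set" where
  "extensions a K \<rho> = {i \<in> cells a K. \<forall>j. \<rho> j \<noteq> 0 \<longrightarrow> i j = \<rho> j}"

lemma xsum_eq_sum_Var: "xsum n a \<rho> = (\<Sum>c\<in>extensions a {1..n} \<rho>. Var c)"
  unfolding xsum_def extensions_def ..

lemma finite_extensions: "finite K \<Longrightarrow> finite (extensions a K \<rho>)"
  unfolding extensions_def using finite_cells by (rule finite_subset[rotated]) auto

lemma xsum_eq_sum_extensions:
  assumes K: "K \<subseteq> {1..n}" and \<rho>: "supp \<rho> \<subseteq> K"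
  shows "xsum n a \<rho> = (\<Sum>i\<in>extensions a K \<rho>. xsum n a i)"
proof -
  define restr where "restr c = (\<lambda>j. if j \<in> K then c j else 0)" for c :: "nat \<Rightarrow> nat"
  have fib: "{c \<in> extensions a {1..n} \<rho>. restr c = i} = extensions a {1..n} i"
    if i: "i \<in> extensions a K \<rho>" for i
  proof (intro set_eqI iffI)
    fix c assume "c \<in> {c \<in> extensions a {1..n} \<rho>. restr c = i}"
    then show "c \<in> extensions a {1..n} i"
      using i unfolding extensions_def cells_def restr_def by auto
  next
    fix c assume c: "c \<in> extensions a {1..n} i"
    have "restr c = i"
      using c i unfolding extensions_def cells_def restr_def by fastforce
    moreover have "c \<in> extensions a {1..n} \<rho>"
      using c i \<rho> unfolding extensions_def cells_def supp_def by fastforce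
    ultimately show "c \<in> {c \<in> extensions a {1..n} \<rho>. restr c = i}" by simp
  qed
  have "restr ` extensions a {1..n} \<rho> \<subseteq> extensions a K \<rho>"
    using K \<rho> unfolding extensions_def cells_def restr_def supp_def by (auto simp: subset_iff)
  then have "xsum n a \<rho>
      = (\<Sum>i\<in>extensions a K \<rho>. \<Sum>c\<in>{c \<in> extensions a {1..n} \<rho>. restr c = i}. Var c)"
    unfolding xsum_eq_sum_Var
    by (intro sum.group[symmetric] finite_extensions) (use finite_subset[OF K] in auto)
  also have "\<dots> = (\<Sum>i\<in>extensions a K \<rho>. xsum n a i)"
    by (rule sum.cong[OF refl]) (metis fib xsum_eq_sum_Var)
  finally show ?thesis .
qed

lemma subspace_I_Delta: "ring_module.subspace (I_Delta n a \<Delta>)"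
  unfolding I_Delta_def ideal_gen_eq_span by (rule ring_module.subspace_span)

lemma minor_mem_I_Delta:
  assumes "K \<in> \<Delta>" "i \<in> cells a K" "j \<in> cells a K" "l \<in> K"
  shows "xsum n a i * xsum n a j - xsum n a (i(l := j l)) * xsum n a (j(l := i l)) \<in> I_Delta n a \<Delta>"
proof -
  have "xsum n a i * xsum n a j - xsum n a (j(l := i l)) * xsum n a (i(l := j l))
      \<in> minors_ideal a K (xsum n a)"
    unfolding minors_ideal_def ideal_gen_eq_span by (rule ring_module.span_base) (use assms in blast)
  then show ?thesis
    unfolding mult.commute[of "xsum n a (i(l := j l))"]
    unfolding I_Delta_def ideal_gen_eq_span using assms(1) by (intro ring_module.span_base) blast
qed

text \<open>Refine all four entries to cells of the joint support \<open>K\<close>; exchanging coordinate \<open>l\<close>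
  pairs the terms of the two products bijectively, and each pair differs by a minor of \<open>A\<^sub>K\<close>.\<close>

lemma exchange_mem_I_Delta:
  assumes sc: "simplicial_complex n \<Delta>" and K: "supp r1 \<union> supp r2 \<in> \<Delta>"
  shows "xsum n a r1 * xsum n a r2 - xsum n a (r1(l := r2 l)) * xsum n a (r2(l := r1 l))
    \<in> (I_Delta n a \<Delta> :: (nat \<Rightarrow> nat, 'k::comm_ring_1) mpoly set)"
proof (cases "l \<in> supp r1 \<union> supp r2")
  case False
  then have "r1(l := r2 l) = r1" "r2(l := r1 l) = r2" by (auto simp: supp_def)
  then show ?thesis using ring_module.subspace_0[OF subspace_I_Delta] by simp
next
  case True
  define K where "K = supp r1 \<union> supp r2"
  let ?B = "xsum n a :: (nat \<Rightarrow> nat) \<Rightarrow> (nat \<Rightarrow> nat, 'k) mpoly" and ?E = "extensions a K"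
  let ?r1' = "r1(l := r2 l)" and ?r2' = "r2(l := r1 l)"
  have KD: "K \<in> \<Delta>" and lK: "l \<in> K" using K True by (simp_all add: K_def)
  have Kn: "K \<subseteq> {1..n}" using sc KD unfolding simplicial_complex_def by blast
  have B: "?B r = (\<Sum>i\<in>?E r. ?B i)" if "supp r \<subseteq> K" for r
    by (rule xsum_eq_sum_extensions[OF Kn that])
  have supps: "supp r1 \<subseteq> K" "supp r2 \<subseteq> K" "supp ?r1' \<subseteq> K" "supp ?r2' \<subseteq> K"
    using lK supp_fun_upd[of r1 l] supp_fun_upd[of r2 l] by (auto simp: K_def)
  define sw where "sw = (\<lambda>(i::nat \<Rightarrow> nat, j::nat \<Rightarrow> nat). (i(l := j l), j(l := i l)))"
  have "?B ?r1' * ?B ?r2' = (\<Sum>(p, q)\<in>?E ?r1' \<times> ?E ?r2'. ?B p * ?B q)"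
    unfolding B[OF supps(3)] B[OF supps(4)] sum_product sum.cartesian_product ..
  also have "\<dots> = (\<Sum>(i, j)\<in>?E r1 \<times> ?E r2. ?B (i(l := j l)) * ?B (j(l := i l)))"
  proof (rule sum.reindex_bij_witness[of _ sw sw])
    fix x assume "x \<in> ?E r1 \<times> ?E r2"
    then show "sw x \<in> ?E ?r1' \<times> ?E ?r2'"
      using lK unfolding sw_def extensions_def cells_def by (auto split: prod.splits)
  next
    fix x assume "x \<in> ?E ?r1' \<times> ?E ?r2'"
    then show "sw x \<in> ?E r1 \<times> ?E r2"
      using lK unfolding sw_def extensions_def cells_def by (auto split: prod.splits if_splits)
  qed (auto simp: sw_def split: prod.splits)
  finally have B': "?B ?r1' * ?B ?r2' = (\<Sum>(i, j)\<in>?E r1 \<times> ?E r2. ?B (i(l := j l)) * ?B (j(l := i l)))" .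
  have "?B r1 * ?B r2 - ?B ?r1' * ?B ?r2'
      = (\<Sum>(i, j)\<in>?E r1 \<times> ?E r2. ?B i * ?B j - ?B (i(l := j l)) * ?B (j(l := i l)))"
    unfolding B[OF supps(1)] B[OF supps(2)] B' sum_product sum.cartesian_product split_def
    by (rule sum_subtractf[symmetric])
  also have "\<dots> \<in> I_Delta n a \<Delta>"
    using minor_mem_I_Delta[OF KD _ _ lK]
    by (intro ring_module.subspace_sum[OF subspace_I_Delta]) (auto simp: extensions_def)
  finally show ?thesis .
qed

section \<open>Rearranging rows modulo an ideal\<close>

definition column :: "(nat \<Rightarrow> nat) multiset \<Rightarrow> nat \<Rightarrow> nat multiset" where
  "column M j = image_mset (\<lambda>r. r j) M"

lemma column_union: "column (M + N) j = column M j + column N j"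
  by (simp add: column_def)

lemma column_mset: "column (mset C) j = mset (map (\<lambda>r. r j) C)"
  by (simp add: column_def)

lemma column_drop_eq:
  assumes len: "length C = length T" and agree: "\<forall>m<p. (C!m) j = (T!m) j"
    and col: "column (mset C) j = column (mset T) j"
  shows "column (mset (drop p C)) j = column (mset (drop p T)) j"
proof -
  have "map (\<lambda>r. r j) (take p C) = map (\<lambda>r. r j) (take p T)"
    using len agree by (intro nth_equalityI) auto
  then have "column (mset (take p C)) j = column (mset (take p T)) j"
    by (simp add: column_mset)
  moreover have "column (mset C) j = column (mset (take p C)) j + column (mset (drop p C)) j"
    "column (mset T) j = column (mset (take p T)) j + column (mset (drop p T)) j"
    by (simp_all flip: column_union mset_append)
  ultimately show ?thesis using col by simp
qed

lemma value_in_column_drop: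
  assumes "length C = length T" "\<forall>m<p. C!m = T!m" "column (mset C) j = column (mset T) j"
    and "r \<in> set (drop p C)"
  shows "r j \<in># column (mset (drop p T)) j"
proof -
  have "column (mset (drop p C)) j = column (mset (drop p T)) j"
    using assms(1-3) by (intro column_drop_eq) simp_all
  moreover have "r j \<in># column (mset (drop p C)) j"
    using assms(4) by (simp add: column_def)
  ultimately show ?thesis by simp
qed

definition exch :: "(nat \<Rightarrow> nat) list \<Rightarrow> nat \<Rightarrow> nat \<Rightarrow> nat \<Rightarrow> (nat \<Rightarrow> nat) list" where
  "exch C i k l = C[i := (C!i)(l := (C!k) l), k := (C!k)(l := (C!i) l)]"

lemma length_exch [simp]: "length (exch C i k l) = length C"
  by (simp add: exch_def)

lemma nth_exch:
  assumes "i < length C" "k < length C" "i \<noteq> k"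
  shows "exch C i k l ! m =
    (if m = i then (C!i)(l := (C!k) l) else if m = k then (C!k)(l := (C!i) l) else C!m)"
  using assms by (auto simp: exch_def nth_list_update)

lemma mset_nth_split:
  assumes "distinct is" "set is \<subseteq> {..<length C}"
  shows "mset C = mset (map ((!) C) is) + mset (map ((!) C) (filter (\<lambda>m. m \<notin> set is) [0..<length C]))"
proof -
  have "mset (filter (\<lambda>m. m \<in> set is) [0..<length C]) = mset is"
    using assms by (intro iffD1[OF set_eq_iff_mset_eq_distinct]) auto
  then have "mset [0..<length C] = mset is + mset (filter (\<lambda>m. m \<notin> set is) [0..<length C])"
    by (metis mset_filter multiset_partition)
  then show ?thesis
    by (metis image_mset_union map_nth mset_map)
qed

lemma mset_exch_split:
  assumes "distinct is" "set is \<subseteq> {..<length C}" "i \<in> set is" "k \<in> set is" "i \<noteq> k"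
  obtains R where "mset C = mset (map ((!) C) is) + R"
    and "mset (exch C i k l) = mset (map ((!) (exch C i k l)) is) + R"
proof
  let ?rest = "filter (\<lambda>m. m \<notin> set is) [0..<length C]"
  show "mset C = mset (map ((!) C) is) + mset (map ((!) C) ?rest)"
    using mset_nth_split[OF assms(1,2)] .
  have "i < length C" "k < length C"
    using assms by auto
  then have rest: "map ((!) (exch C i k l)) ?rest = map ((!) C) ?rest"
    using assms(3-5) by (intro map_cong refl) (auto simp: nth_exch)
  have "mset (exch C i k l) = mset (map ((!) (exch C i k l)) is) + mset (map ((!) (exch C i k l)) ?rest)"
    using mset_nth_split[of "is" "exch C i k l"] assms(1,2) by simp
  then show "mset (exch C i k l) = mset (map ((!) (exch C i k l)) is) + mset (map ((!) C) ?rest)"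
    by (simp only: rest)
qed

lemma column_exch:
  assumes "i < length C" "k < length C" "i \<noteq> k"
  shows "column (mset (exch C i k l)) j = column (mset C) j"
proof -
  obtain R where "mset C = mset (map ((!) C) [i, k]) + R"
    "mset (exch C i k l) = mset (map ((!) (exch C i k l)) [i, k]) + R"
    using mset_exch_split[of "[i, k]" C i k l] assms by auto
  then show ?thesis
    using assms by (simp add: column_union nth_exch) (simp add: column_def add_mset_commute)
qed

lemma in_set_dropE:
  assumes "r \<in> set (drop p xs)"
  obtains m where "p \<le> m" "m < length xs" "r = xs ! m"
proof -
  obtain q where "q < length (drop p xs)" "drop p xs ! q = r"
    using assms by (auto simp: in_set_conv_nth)
  then show thesis by (intro that[of "p + q"]) auto
qed

text \<open>An abstract form of the setting: \<open>x r\<close> stands for the margin entry of the row \<open>r\<close>, \<open>D\<close> for the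
  complex and \<open>Lc\<close> for the intersection of its facets; rows supported in \<open>Lc\<close> are called core rows.\<close>

locale exchange_moves =
  fixes D :: "nat set set" and Lc :: "nat set"
    and I :: "'r::comm_ring_1 set" and x :: "(nat \<Rightarrow> nat) \<Rightarrow> 'r"
  assumes subspace_I: "ring_module.subspace I"
    and down_closed: "J \<in> D \<Longrightarrow> A \<subseteq> J \<Longrightarrow> A \<in> D"
    and union_core: "J \<in> D \<Longrightarrow> J \<union> Lc \<in> D"
    and core_in: "Lc \<in> D"
    and finite_face: "J \<in> D \<Longrightarrow> finite J"
    and exchange: "supp r1 \<union> supp r2 \<in> D \<Longrightarrow>
      x r1 * x r2 - x (r1(l := r2 l)) * x (r2(l := r1 l)) \<in> I"
begin

definition row_cong :: "(nat \<Rightarrow> nat) multiset \<Rightarrow> (nat \<Rightarrow> nat) multiset \<Rightarrow> bool" (infix \<open>\<approx>\<close> 50) where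
  "M \<approx> N \<longleftrightarrow> (\<Prod>r\<in>#M. x r) - (\<Prod>r\<in>#N. x r) \<in> I"

lemma row_cong_refl: "M \<approx> M"
  unfolding row_cong_def using ring_module.subspace_0[OF subspace_I] by simp

lemma row_cong_trans [trans]: "L \<approx> M \<Longrightarrow> M \<approx> N \<Longrightarrow> L \<approx> N"
  unfolding row_cong_def using ring_module.subspace_add[OF subspace_I] by fastforce

lemma row_cong_add:
  assumes "M \<approx> N"
  shows "M + K \<approx> N + K"
proof -
  have "(\<Prod>r\<in>#K. x r) * ((\<Prod>r\<in>#M. x r) - (\<Prod>r\<in>#N. x r)) \<in> I"
    using assms unfolding row_cong_def by (rule ring_module.subspace_scale[OF subspace_I])
  then show ?thesis
    unfolding row_cong_def by (simp add: algebra_simps)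
qed

lemma face_if_subset_union_core: "J \<in> D \<Longrightarrow> A \<subseteq> J \<union> Lc \<Longrightarrow> A \<in> D"
  using down_closed union_core by blast

lemma row_cong_exchange:
  assumes "supp r1 \<union> supp r2 \<in> D"
  shows "add_mset r1 (add_mset r2 M) \<approx> add_mset (r1(l := r2 l)) (add_mset (r2(l := r1 l)) M)"
proof -
  have "{#r1, r2#} \<approx> {#r1(l := r2 l), r2(l := r1 l)#}"
    unfolding row_cong_def using exchange[OF assms, of l] by simp
  from row_cong_add[OF this, of M] show ?thesis by simp
qed

lemma core_row_update_union_face:
  assumes "supp w \<subseteq> Lc" "supp q \<in> D" "supp (q(l := v)) \<in> D"
  shows "supp (w(l := v)) \<union> supp q \<in> D"
proof (cases "v = 0")
  case True
  then have "supp (w(l := v)) \<union> supp q \<subseteq> supp q \<union> Lc"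
    using assms(1) by (auto simp: supp_def)
  then show ?thesis using face_if_subset_union_core[OF assms(2)] by blast
next
  case False
  then have "supp (w(l := v)) \<union> supp q \<subseteq> supp (q(l := v)) \<union> Lc"
    using assms(1) by (auto simp: supp_def)
  then show ?thesis using face_if_subset_union_core[OF assms(3)] by blast
qed

text \<open>Route the entry through the core row \<open>w\<close> in three admissible exchanges.\<close>

lemma row_cong_exchange_via_core_row:
  assumes w: "supp w \<subseteq> Lc" and r1: "supp r1 \<in> D" and r2: "supp r2 \<in> D"
    and r1': "supp (r1(l := r2 l)) \<in> D" and r2': "supp (r2(l := r1 l)) \<in> D"
  shows "add_mset w (add_mset r1 (add_mset r2 M))
    \<approx> add_mset w (add_mset (r1(l := r2 l)) (add_mset (r2(l := r1 l)) M))"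
proof -
  define a1 where "a1 = r1(l := w l)"
  have "supp a1 \<subseteq> supp r1 \<union> Lc"
    using w by (auto simp: a1_def supp_def)
  then have a1: "supp a1 \<in> D"
    by (rule face_if_subset_union_core[OF r1])
  have "add_mset r1 (add_mset w (add_mset r2 M)) \<approx> add_mset a1 (add_mset (w(l := r1 l)) (add_mset r2 M))"
    unfolding a1_def by (rule row_cong_exchange, rule face_if_subset_union_core[OF r1]) (use w in auto)
  also have "\<dots> = add_mset (w(l := r1 l)) (add_mset r2 (add_mset a1 M))"
    by (simp add: add_mset_commute)
  also have "\<dots> \<approx> add_mset (w(l := r2 l)) (add_mset (r2(l := r1 l)) (add_mset a1 M))"
    using row_cong_exchange[OF core_row_update_union_face[OF w r2 r2'], where l = l and M = "add_mset a1 M"] by simp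
  also have "\<dots> = add_mset (w(l := r2 l)) (add_mset a1 (add_mset (r2(l := r1 l)) M))"
    by (simp add: add_mset_commute)
  also have "\<dots> \<approx> add_mset w (add_mset (r1(l := r2 l)) (add_mset (r2(l := r1 l)) M))"
  proof -
    have "supp (a1(l := r2 l)) \<in> D"
      using r1' by (simp add: a1_def)
    from row_cong_exchange[OF core_row_update_union_face[OF w a1 this], where l = l and M = "add_mset (r2(l := r1 l)) M"]
    show ?thesis by (simp add: a1_def)
  qed
  finally show ?thesis
    by (simp add: add_mset_commute)
qed

lemma row_cong_exch:
  assumes ik: "i < length C" "k < length C" "i \<noteq> k" and face: "supp (C!i) \<union> supp (C!k) \<in> D"
  shows "mset C \<approx> mset (exch C i k l)"
proof -
  obtain R where "mset C = mset (map ((!) C) [i, k]) + R"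
    "mset (exch C i k l) = mset (map ((!) (exch C i k l)) [i, k]) + R"
    using mset_exch_split[of "[i, k]" C i k l] ik by auto
  then show ?thesis
    using row_cong_exchange[OF face, where l = l and M = R] ik by (simp add: nth_exch)
qed

lemma row_cong_exch_via_core_row:
  assumes ik: "i < length C" "k < length C" "w < length C" "distinct [w, i, k]"
    and w: "supp (C!w) \<subseteq> Lc" and faces: "supp (C!i) \<in> D" "supp (C!k) \<in> D"
      "supp ((C!i)(l := (C!k) l)) \<in> D" "supp ((C!k)(l := (C!i) l)) \<in> D"
  shows "mset C \<approx> mset (exch C i k l)"
proof -
  obtain R where "mset C = mset (map ((!) C) [w, i, k]) + R"
    "mset (exch C i k l) = mset (map ((!) (exch C i k l)) [w, i, k]) + R"
    using mset_exch_split[of "[w, i, k]" C i k l] ik by auto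
  then show ?thesis
    using row_cong_exchange_via_core_row[OF w faces, where M = R] ik by (simp add: nth_exch)
qed

end

text \<open>The rows of \<open>C\<close> are made equal to those of the target \<open>T\<close>, whose rows from position \<open>s\<close> on are
  core rows, one at a time. While row \<open>i < s - 1\<close> is filled, the untouched row \<open>s - 1\<close> of \<open>C\<close> is a
  core row and carries the exchanges; from row \<open>s - 1\<close> on, counting entries column by column
  shows that all later rows of \<open>C\<close> lie in the face of the row being filled.\<close>

locale row_filling = exchange_moves +
  fixes T :: "(nat \<Rightarrow> nat) list" and s :: nat
  assumes T_faces: "\<forall>r\<in>set T. supp r \<in> D" and s_le: "s \<le> length T"
    and T_tail: "\<forall>m. s \<le> m \<longrightarrow> m < length T \<longrightarrow> supp (T!m) \<subseteq> Lc"
begin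

definition partially_filled :: "(nat \<Rightarrow> nat) list \<Rightarrow> nat \<Rightarrow> bool" where
  "partially_filled C i \<longleftrightarrow> length C = length T \<and> (\<forall>m<i. C!m = T!m)
     \<and> (\<forall>m. i < m \<and> m < s \<longrightarrow> supp (C!m) \<subseteq> Lc) \<and> (\<forall>r\<in>set C. supp r \<in> D)
     \<and> (\<forall>j. column (mset C) j = column (mset T) j)
     \<and> (\<forall>j. j \<notin> Lc \<longrightarrow> (C!i) j \<noteq> 0 \<longrightarrow> (C!i) j = (T!i) j)"

lemma T_tail_value_zero:
  assumes "r \<in> set (drop p T)" "s \<le> p" "j \<notin> Lc"
  shows "r j = 0"
proof -
  obtain m where "p \<le> m" "m < length T" "r = T!m"
    using assms(1) by (rule in_set_dropE)
  then have "supp r \<subseteq> Lc"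
    using T_tail assms(2) by auto
  then show ?thesis
    using assms(3) by (auto simp: supp_def)
qed

lemma exists_source_row:
  assumes C: "partially_filled C i" and i: "i < length T" and j: "(C!i) j \<noteq> (T!i) j"
  obtains k where "i < k" "k < length T" "(C!k) j = (T!i) j"
proof -
  have "column (mset (drop i C)) j = column (mset (drop i T)) j"
    using C by (intro column_drop_eq) (auto simp: partially_filled_def)
  moreover have "(T!i) j \<in># column (mset (drop i T)) j"
    using i by (simp add: column_def Cons_nth_drop_Suc[symmetric])
  ultimately have "(T!i) j \<in># column (mset (drop i C)) j"
    by simp
  then obtain r where "r \<in> set (drop i C)" "r j = (T!i) j"
    by (auto simp: column_def)
  then obtain k where "i \<le> k" "k < length C" "(C!k) j = (T!i) j"
    by (metis in_set_dropE)
  then show thesis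
    using that j C by (metis le_neq_implies_less partially_filled_def)
qed

lemma later_rows_in_face:
  assumes C: "partially_filled C i" and i: "i < length T" and s: "s \<le> Suc i"
    and k: "i < k" "k < length T"
  shows "supp (C!k) \<subseteq> supp (T!i) \<union> Lc"
proof
  fix j assume j: "j \<in> supp (C!k)"
  show "j \<in> supp (T!i) \<union> Lc"
  proof (cases "j \<in> Lc")
    case False
    have "C!k \<in> set (drop i C)"
      using C k by (auto simp: partially_filled_def in_set_conv_nth intro!: exI[of _ "k - i"])
    then have "(C!k) j \<in># column (mset (drop i T)) j"
      using C by (intro value_in_column_drop) (auto simp: partially_filled_def)
    also have "column (mset (drop i T)) j = add_mset ((T!i) j) (column (mset (drop (Suc i) T)) j)"
      using i by (simp add: column_def Cons_nth_drop_Suc[symmetric])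
    finally have "(C!k) j = (T!i) j \<or> (\<exists>r\<in>set (drop (Suc i) T). (C!k) j = r j)"
      by (auto simp: column_def)
    moreover have nz: "(C!k) j \<noteq> 0"
      using j by (simp add: supp_def)
    ultimately have "(C!k) j = (T!i) j"
      using T_tail_value_zero[OF _ s False] by metis
    with nz show ?thesis
      by (simp add: supp_def)
  qed simp
qed

lemma T_face: "i < length T \<Longrightarrow> supp (T!i) \<in> D"
  using T_faces by simp

lemma filled_row_supp: "partially_filled C i \<Longrightarrow> supp (C!i) \<subseteq> supp (T!i) \<union> Lc"
  unfolding partially_filled_def supp_def by auto

lemma exchanged_rows_faces:
  assumes C: "partially_filled C i" and i: "i < length T" and j: "(C!i) j \<noteq> (T!i) j"
    and k: "k < length T"
  shows "supp ((C!i)(j := (T!i) j)) \<in> D" and "supp ((C!k)(j := (C!i) j)) \<subseteq> supp (C!k) \<union> Lc"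
    and "supp ((C!k)(j := (C!i) j)) \<in> D"
proof -
  have "supp ((C!i)(j := (T!i) j)) \<subseteq> supp (T!i) \<union> Lc"
    using filled_row_supp[OF C] by (auto simp: supp_def)
  then show "supp ((C!i)(j := (T!i) j)) \<in> D"
    by (rule face_if_subset_union_core[OF T_face[OF i]])
  show supp_k: "supp ((C!k)(j := (C!i) j)) \<subseteq> supp (C!k) \<union> Lc"
    using C j unfolding partially_filled_def supp_def by auto
  have "supp (C!k) \<in> D"
    using C k unfolding partially_filled_def by simp
  then show "supp ((C!k)(j := (C!i) j)) \<in> D"
    using face_if_subset_union_core supp_k by blast
qed

lemma source_row_in_face:
  assumes C: "partially_filled C i" and i: "i < length T" and k: "i < k" "k < length T"
    and no_core_row: "\<not> (\<exists>w. i < w \<and> w < s \<and> w \<noteq> k)"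
  shows "supp (C!k) \<subseteq> supp (T!i) \<union> Lc"
proof (cases "k < s")
  case True
  then show ?thesis
    using C k(1) unfolding partially_filled_def by blast
next
  case False
  have "s \<le> Suc i"
  proof (rule ccontr)
    assume "\<not> s \<le> Suc i"
    then have "i < Suc i \<and> Suc i < s \<and> Suc i \<noteq> k"
      using False by auto
    then show False
      using no_core_row by blast
  qed
  then show ?thesis
    using later_rows_in_face[OF C i _ k] by simp
qed

lemma fill_exchange_cong:
  assumes C: "partially_filled C i" and i: "i < length T" and j: "(C!i) j \<noteq> (T!i) j"
    and k: "i < k" "k < length T" "(C!k) j = (T!i) j"
  shows "mset C \<approx> mset (exch C i k j)"
proof -
  have len: "length C = length T" and faces: "\<forall>r\<in>set C. supp r \<in> D"
    and core_rows: "\<forall>m. i < m \<and> m < s \<longrightarrow> supp (C!m) \<subseteq> Lc"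
    using C unfolding partially_filled_def by blast+
  have ik: "i < length C" "k < length C" "i \<noteq> k"
    using i k len by auto
  show ?thesis
  proof (cases "\<exists>w. i < w \<and> w < s \<and> w \<noteq> k")
    case True
    then obtain w where w: "i < w" "w < s" "w \<noteq> k" by blast
    show ?thesis
    proof (rule row_cong_exch_via_core_row)
      show "w < length C" "distinct [w, i, k]"
        using w ik s_le len by auto
      show "supp (C!w) \<subseteq> Lc"
        using core_rows w by blast
      show "supp ((C!i)(j := (C!k) j)) \<in> D" "supp ((C!k)(j := (C!i) j)) \<in> D"
        using exchanged_rows_faces[OF C i j k(2)] k(3) by simp_all
    qed (use ik faces in auto)
  next
    case False
    then have "supp (C!i) \<union> supp (C!k) \<subseteq> supp (T!i) \<union> Lc"
      using filled_row_supp[OF C] source_row_in_face[OF C i k(1,2)] by blast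
    then have "supp (C!i) \<union> supp (C!k) \<in> D"
      by (rule face_if_subset_union_core[OF T_face[OF i]])
    then show ?thesis
      by (rule row_cong_exch[OF ik])
  qed
qed

lemma fill_exchange_partially_filled:
  assumes C: "partially_filled C i" and i: "i < length T" and j: "(C!i) j \<noteq> (T!i) j"
    and k: "i < k" "k < length T" "(C!k) j = (T!i) j"
  shows "partially_filled (exch C i k j) i"
proof -
  define C' where "C' = exch C i k j"
  from C have len: "length C = length T" and prefix: "\<forall>m<i. C!m = T!m"
    and core_rows: "\<forall>m. i < m \<and> m < s \<longrightarrow> supp (C!m) \<subseteq> Lc" and faces: "\<forall>r\<in>set C. supp r \<in> D"
    and cols: "\<forall>j. column (mset C) j = column (mset T) j"
    and partial: "\<forall>j. j \<notin> Lc \<longrightarrow> (C!i) j \<noteq> 0 \<longrightarrow> (C!i) j = (T!i) j"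
    unfolding partially_filled_def by blast+
  have ik: "i < length C" "k < length C" "i \<noteq> k"
    using i k len by auto
  have C'_i: "C'!i = (C!i)(j := (T!i) j)" and C'_k: "C'!k = (C!k)(j := (C!i) j)"
    and C'_other: "\<And>m. m \<noteq> i \<Longrightarrow> m \<noteq> k \<Longrightarrow> C'!m = C!m"
    using ik k(3) by (simp_all add: C'_def nth_exch)
  note faces' = exchanged_rows_faces[OF C i j k(2)]
  have "partially_filled C' i"
    unfolding partially_filled_def
  proof (intro conjI allI impI ballI)
    show "length C' = length T"
      using len by (simp add: C'_def)
    show "C'!m = T!m" if "m < i" for m
      using that prefix k(1) C'_other[of m] by simp
    show "supp (C'!m) \<subseteq> Lc" if m: "i < m \<and> m < s" for m
    proof -
      have "supp (C!m) \<subseteq> Lc" "m \<noteq> i"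
        using core_rows m by auto
      then show ?thesis
        using faces'(2) C'_k C'_other[of m] by (cases "m = k") auto
    qed
    show "supp r \<in> D" if r: "r \<in> set C'" for r
    proof -
      obtain m where m: "m < length C" "r = C'!m"
        using r by (auto simp: in_set_conv_nth C'_def)
      then show ?thesis
        using faces faces'(1,3) C'_i C'_k C'_other[of m] by (cases "m = i \<or> m = k") auto
    qed
    show "column (mset C') j' = column (mset T) j'" for j'
      using cols column_exch[OF ik] by (simp add: C'_def)
    show "(C'!i) j' = (T!i) j'" if "j' \<notin> Lc" "(C'!i) j' \<noteq> 0" for j'
      using that partial C'_i by (cases "j' = j") auto
  qed
  then show ?thesis
    by (simp add: C'_def)
qed

lemma fill_step:
  assumes C: "partially_filled C i" and i: "i < length T" and j: "(C!i) j \<noteq> (T!i) j"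
  shows "\<exists>C'. mset C \<approx> mset C' \<and> partially_filled C' i \<and> C'!i = (C!i)(j := (T!i) j)"
proof -
  obtain k where k: "i < k" "k < length T" "(C!k) j = (T!i) j"
    using exists_source_row[OF C i j] .
  have "exch C i k j ! i = (C!i)(j := (T!i) j)"
    using C i k by (simp add: partially_filled_def nth_exch)
  then show ?thesis
    using fill_exchange_cong[OF C i j k] fill_exchange_partially_filled[OF C i j k] by blast
qed

lemma fill_row:
  assumes "partially_filled C i" "i < length T"
  shows "\<exists>C'. mset C \<approx> mset C' \<and> partially_filled C' i \<and> C'!i = T!i"
  using assms
proof (induction "card {j. (C!i) j \<noteq> (T!i) j}" arbitrary: C rule: less_induct)
  case less
  have "supp (C!i) \<in> D" "supp (T!i) \<in> D"
    using less.prems T_faces by (auto simp: partially_filled_def)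
  then have "finite (supp (C!i) \<union> supp (T!i))"
    using finite_face by blast
  then have fin: "finite {j. (C!i) j \<noteq> (T!i) j}"
    by (rule finite_subset[rotated]) (auto simp: supp_def)
  show ?case
  proof (cases "\<exists>j. (C!i) j \<noteq> (T!i) j")
    case False
    then show ?thesis
      using less.prems(1) row_cong_refl by blast
  next
    case True
    then obtain j where j: "(C!i) j \<noteq> (T!i) j" by blast
    obtain C' where C': "mset C \<approx> mset C'" "partially_filled C' i" "C'!i = (C!i)(j := (T!i) j)"
      using fill_step[OF less.prems j] by blast
    have "{j'. (C'!i) j' \<noteq> (T!i) j'} = {j'. (C!i) j' \<noteq> (T!i) j'} - {j}"
      using C'(3) by auto
    moreover have "card ({j'. (C!i) j' \<noteq> (T!i) j'} - {j}) < card {j'. (C!i) j' \<noteq> (T!i) j'}"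
      by (rule card_Diff1_less[OF fin]) (use j in simp)
    ultimately have "card {j'. (C'!i) j' \<noteq> (T!i) j'} < card {j'. (C!i) j' \<noteq> (T!i) j'}"
      by simp
    then obtain C'' where "mset C' \<approx> mset C''" "partially_filled C'' i" "C''!i = T!i"
      using less.hyps C'(2) less.prems(2) by blast
    then show ?thesis
      using C'(1) row_cong_trans by blast
  qed
qed

lemma partially_filled_Suc:
  assumes C: "partially_filled C i" and filled: "C!i = T!i" and i: "Suc i < length T"
  shows "partially_filled C (Suc i)"
proof -
  have prefix: "\<forall>m<Suc i. C!m = T!m"
    using C filled by (auto simp: partially_filled_def less_Suc_eq)
  have tail_zero: "(C!Suc i) j = 0" if j: "j \<notin> Lc" and tail: "s \<le> Suc i" for j
  proof -
    have "C!Suc i \<in> set (drop (Suc i) C)"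
      using C i by (auto simp: partially_filled_def in_set_conv_nth intro!: exI[of _ 0])
    then have "(C!Suc i) j \<in># column (mset (drop (Suc i) T)) j"
      using C prefix by (intro value_in_column_drop) (auto simp: partially_filled_def)
    then obtain r where "r \<in> set (drop (Suc i) T)" "(C!Suc i) j = r j"
      by (auto simp: column_def)
    then show ?thesis
      using T_tail_value_zero[OF _ tail j] by simp
  qed
  have helper_zero: "(C!Suc i) j = 0" if "j \<notin> Lc" "Suc i < s" for j
    using C that by (auto simp: partially_filled_def supp_def)
  have "(C!Suc i) j = 0" if "j \<notin> Lc" for j
    using tail_zero[OF that] helper_zero[OF that] by (cases "s \<le> Suc i") auto
  then show ?thesis
    using C prefix by (auto simp: partially_filled_def)
qed

lemma partially_filled_cong:
  assumes "partially_filled C i" "i < length T"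
  shows "mset C \<approx> mset T"
  using assms
proof (induction "length T - i" arbitrary: C i)
  case 0
  then show ?case by simp
next
  case (Suc d)
  obtain C' where C': "mset C \<approx> mset C'" "partially_filled C' i" "C'!i = T!i"
    using fill_row[OF Suc.prems] by blast
  show ?case
  proof (cases "Suc i < length T")
    case True
    moreover have "d = length T - Suc i"
      using Suc.hyps(2) by simp
    ultimately have "mset C' \<approx> mset T"
      using Suc.hyps(1) partially_filled_Suc[OF C'(2,3)] by blast
    then show ?thesis
      using C'(1) row_cong_trans by blast
  next
    case False
    have "C' = T"
      using C'(2,3) Suc.prems(2) False
      by (intro nth_equalityI) (auto simp: partially_filled_def less_Suc_eq not_less_eq)
    then show ?thesis
      using C'(1) by simp
  qed
qed

end

context exchange_moves
begin

lemma row_cong_columns_eq: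
  assumes sizes: "size H = size A" "size B = size A"
    and H: "\<forall>h\<in>#H. supp h \<subseteq> Lc" and A: "\<forall>r\<in>#A. supp r \<in> D" and B: "\<forall>r\<in>#B. supp r \<in> D"
    and cols: "\<forall>j. column A j = column B j"
  shows "H + A \<approx> B + H"
proof (cases "H = {#}")
  case True
  then show ?thesis using sizes row_cong_refl by simp
next
  case False
  obtain hs as bs where lists: "mset hs = H" "mset as = A" "mset bs = B"
    using ex_mset by metis
  have lens: "length as = length hs" "length bs = length hs" "0 < length hs"
    using sizes lists False by (metis size_mset, metis size_mset, auto)
  have hs_core: "supp h \<subseteq> Lc" if "h \<in> set hs" for h
    using H lists that by auto
  interpret row_filling D Lc I x "bs @ hs" "length bs"
  proof (intro row_filling.intro exchange_moves_axioms row_filling_axioms.intro)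
    show "\<forall>r\<in>set (bs @ hs). supp r \<in> D"
      using B lists hs_core down_closed[OF core_in] by auto
    show "\<forall>m. length bs \<le> m \<longrightarrow> m < length (bs @ hs) \<longrightarrow> supp ((bs @ hs)!m) \<subseteq> Lc"
      using hs_core by (auto simp: nth_append)
  qed simp
  have "partially_filled (hs @ as) 0"
    unfolding partially_filled_def
  proof (intro conjI allI impI ballI)
    show "length (hs @ as) = length (bs @ hs)"
      using lens by simp
    show "supp ((hs @ as)!m) \<subseteq> Lc" if "0 < m \<and> m < length bs" for m
      using that lens hs_core by (auto simp: nth_append)
    show "supp r \<in> D" if "r \<in> set (hs @ as)" for r
      using that A lists hs_core down_closed[OF core_in] by auto
    show "column (mset (hs @ as)) j = column (mset (bs @ hs)) j" for j
      using cols lists by (simp add: column_union add.commute)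
    show "((hs @ as)!0) j = ((bs @ hs)!0) j" if "j \<notin> Lc" "((hs @ as)!0) j \<noteq> 0" for j
      using that lens hs_core[of "hs!0"] by (auto simp: nth_append supp_def)
  qed simp
  then have "mset (hs @ as) \<approx> mset (bs @ hs)"
    by (rule partially_filled_cong) (use lens in simp)
  then show ?thesis
    using lists by simp
qed

end

section \<open>Binomials of \<open>Q_Delta\<close>\<close>

lemma Inter_facets_union_mem:
  assumes sc: "simplicial_complex n \<Delta>" and J: "J \<in> \<Delta>"
  shows "J \<union> \<Inter>(facets \<Delta>) \<in> \<Delta>"
proof -
  have "finite \<Delta>"
    using sc unfolding simplicial_complex_def by (meson finite_Pow_iff finite_atLeastAtMost finite_subset)
  then have fin: "finite {G \<in> \<Delta>. J \<subseteq> G}"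
    by simp
  obtain F where F: "F \<in> {G \<in> \<Delta>. J \<subseteq> G}" "\<forall>G\<in>{G \<in> \<Delta>. J \<subseteq> G}. F \<le> G \<longrightarrow> F = G"
    using finite_has_maximal[OF fin] J by blast
  then have "F \<in> facets \<Delta>"
    unfolding facets_def by auto
  then have "J \<union> \<Inter>(facets \<Delta>) \<subseteq> F"
    using F(1) by blast
  then show ?thesis
    using sc F(1) unfolding simplicial_complex_def by blast
qed

lemma Inter_facets_mem: "simplicial_complex n \<Delta> \<Longrightarrow> \<Inter>(facets \<Delta>) \<in> \<Delta>"
  using Inter_facets_union_mem[of n \<Delta> "{}"] unfolding simplicial_complex_def by auto

lemma exchange_moves_I_Delta:
  assumes sc: "simplicial_complex n \<Delta>"
  shows "exchange_moves \<Delta> (\<Inter>(facets \<Delta>)) (I_Delta n a \<Delta>) (xsum n a)"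
proof
  show "ring_module.subspace (I_Delta n a \<Delta>)"
    by (rule subspace_I_Delta)
  show "J \<in> \<Delta> \<Longrightarrow> A \<subseteq> J \<Longrightarrow> A \<in> \<Delta>" for J A
    using sc unfolding simplicial_complex_def by blast
  show "finite J" if "J \<in> \<Delta>" for J
  proof -
    have "J \<subseteq> {1..n}"
      using sc that unfolding simplicial_complex_def by blast
    then show ?thesis
      using finite_subset by blast
  qed
  show "J \<in> \<Delta> \<Longrightarrow> J \<union> \<Inter>(facets \<Delta>) \<in> \<Delta>" for J
    by (rule Inter_facets_union_mem[OF sc])
  show "\<Inter>(facets \<Delta>) \<in> \<Delta>"
    by (rule Inter_facets_mem[OF sc])
  show "supp r1 \<union> supp r2 \<in> \<Delta> \<Longrightarrow>
      xsum n a r1 * xsum n a r2 - xsum n a (r1(l := r2 l)) * xsum n a (r2(l := r1 l)) \<in> I_Delta n a \<Delta>"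
    for r1 r2 l
    by (rule exchange_mem_I_Delta[OF sc])
qed

lemma S_vars_supp:
  assumes "simplicial_complex n \<Delta>" "\<sigma> \<in> S_vars a \<Delta>"
  shows "supp \<sigma> \<in> \<Delta>" "supp \<sigma> \<subseteq> {1..n}"
proof -
  obtain J where J: "J \<in> \<Delta>" "\<sigma> \<in> cells a J"
    using assms(2) unfolding S_vars_def by blast
  have "supp \<sigma> \<subseteq> J"
    by (rule supp_cells[OF J(2)])
  moreover have "J \<subseteq> {1..n}" "\<forall>G. G \<subseteq> J \<longrightarrow> G \<in> \<Delta>"
    using assms(1) J(1) unfolding simplicial_complex_def by blast+
  ultimately show "supp \<sigma> \<in> \<Delta>" "supp \<sigma> \<subseteq> {1..n}"
    by blast+
qed

lemma xsum_zero_mem_margin_ideal: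
  assumes sc: "simplicial_complex n \<Delta>"
  shows "xsum n a (\<lambda>_. 0) \<in> margin_ideal n a (\<Inter>(facets \<Delta>))"
proof -
  let ?L = "\<Inter>(facets \<Delta>)"
  have "?L \<subseteq> {1..n}"
    using sc Inter_facets_mem[OF sc] unfolding simplicial_complex_def by blast
  then have "xsum n a (\<lambda>_. 0) = (\<Sum>i\<in>cells a ?L. xsum n a i)"
    using xsum_eq_sum_extensions[of ?L n "\<lambda>_. 0" a] by (simp add: extensions_def supp_def)
  also have "\<dots> \<in> margin_ideal n a ?L"
    unfolding margin_ideal_def ideal_gen_eq_span
    by (intro ring_module.span_sum ring_module.span_base) blast
  finally show ?thesis .
qed

lemma sum_single_lookup: "(\<Sum>m\<in>Poly_Mapping.keys p. Poly_Mapping.single m (Poly_Mapping.lookup p m)) = p"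
  by (rule poly_mapping_eqI) (simp add: lookup_sum lookup_single when_def in_keys_iff)

lemma additive_single: "additive (Poly_Mapping.single k)"
  by unfold_locales (rule single_add)

definition eta_exponent :: "nat \<Rightarrow> ((nat \<Rightarrow> nat) \<Rightarrow>\<^sub>0 nat) \<Rightarrow> (nat \<times> nat) \<Rightarrow>\<^sub>0 nat" where
  "eta_exponent n m = (\<Sum>\<sigma>\<in>#var_mset m. \<Sum>j\<in>{1..n}. Poly_Mapping.single (j, \<sigma> j) 1)"

lemma prod_single_one:
  "(\<Prod>x\<in>A. Poly_Mapping.single (g x) 1) = (Poly_Mapping.single (\<Sum>x\<in>A. g x) 1 :: ('a, 'k::comm_semiring_1) mpoly)"
  by (induction A rule: infinite_finite_induct) (simp_all add: mult_single)

lemma prod_mset_single_one: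
  "(\<Prod>x\<in>#M. Poly_Mapping.single (g x) 1) = (Poly_Mapping.single (\<Sum>x\<in>#M. g x) 1 :: ('a, 'k::comm_semiring_1) mpoly)"
  by (induction M) (simp_all add: mult_single)

lemma eta_single:
  "eta n (Poly_Mapping.single m c) = (Poly_Mapping.single (eta_exponent n m) c :: (nat \<times> nat, 'k::comm_ring_1) mpoly)"
proof -
  have "(\<Prod>j\<in>{1..n}. Var (j, \<sigma> j)) = (Poly_Mapping.single (\<Sum>j\<in>{1..n}. Poly_Mapping.single (j, \<sigma> j) 1) 1 :: (nat \<times> nat, 'k) mpoly)"
    for \<sigma> :: "nat \<Rightarrow> nat"
    unfolding Var_def by (rule prod_single_one)
  then show ?thesis
    unfolding eta_def subst_single eta_exponent_def by (simp add: prod_mset_single_one mult_single)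
qed

lemma lookup_eta_exponent:
  assumes j: "j \<in> {1..n}"
  shows "Poly_Mapping.lookup (eta_exponent n m) (j, v) = count (column (var_mset m) j) v"
proof -
  define row where "row \<sigma> = (\<Sum>j'\<in>{1..n}. Poly_Mapping.single (j', \<sigma> j') (1::nat))"
    for \<sigma> :: "nat \<Rightarrow> nat"
  have lookup_row: "Poly_Mapping.lookup (row \<sigma>) (j, v) = (if \<sigma> j = v then 1 else 0)" for \<sigma>
  proof -
    have "Poly_Mapping.lookup (row \<sigma>) (j, v)
        = (\<Sum>j'\<in>{1..n}. if j' = j then (if \<sigma> j = v then 1 else 0) else 0)"
      unfolding row_def lookup_sum by (rule sum.cong[OF refl]) (auto simp: lookup_single when_def)
    then show ?thesis using j by simp
  qed
  have "Poly_Mapping.lookup (\<Sum>\<sigma>\<in>#M. row \<sigma>) (j, v) = count (image_mset (\<lambda>r. r j) M) v" for M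
    by (induction M) (simp_all add: lookup_add lookup_row)
  then show ?thesis
    unfolding eta_exponent_def column_def row_def .
qed

lemma column_eq_if_eta_exponent_eq:
  assumes "eta_exponent n \<alpha> = eta_exponent n \<beta>" "j \<in> {1..n}"
  shows "column (var_mset \<alpha>) j = column (var_mset \<beta>) j"
proof (rule multiset_eqI)
  fix v
  show "count (column (var_mset \<alpha>) j) v = count (column (var_mset \<beta>) j) v"
    using lookup_eta_exponent[OF assms(2), of \<alpha> v] lookup_eta_exponent[OF assms(2), of \<beta> v] assms(1)
    by simp
qed

lemma column_eq_replicate_zero:
  assumes "\<forall>r\<in>#M. r j = 0"
  shows "column M j = replicate_mset (size M) 0"
proof -
  have "column M j = image_mset (\<lambda>_. 0) M"
    unfolding column_def using assms by (intro image_mset_cong) simp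
  then show ?thesis
    by (simp add: image_mset_const_eq)
qed

lemma S_vars_columns_eq:
  assumes sc: "simplicial_complex n \<Delta>"
    and keys: "Poly_Mapping.keys \<alpha> \<subseteq> S_vars a \<Delta>" "Poly_Mapping.keys \<beta> \<subseteq> S_vars a \<Delta>"
    and E: "eta_exponent n \<alpha> = eta_exponent n \<beta>" and deg: "mdeg \<beta> = mdeg \<alpha>"
  shows "column (var_mset \<alpha>) j = column (var_mset \<beta>) j"
proof (cases "j \<in> {1..n}")
  case True
  then show ?thesis by (rule column_eq_if_eta_exponent_eq[OF E])
next
  case False
  have "\<sigma> j = 0" if "\<sigma> \<in># var_mset \<alpha> + var_mset \<beta>" for \<sigma>
  proof -
    have "\<sigma> \<in> S_vars a \<Delta>"
      using keys that by auto
    then have "supp \<sigma> \<subseteq> {1..n}"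
      by (rule S_vars_supp(2)[OF sc])
    then show ?thesis
      using False unfolding supp_def by blast
  qed
  then have "\<forall>\<sigma>\<in>#var_mset \<alpha>. \<sigma> j = 0" "\<forall>\<sigma>\<in>#var_mset \<beta>. \<sigma> j = 0"
    by simp_all
  then show ?thesis
    using deg by (simp add: column_eq_replicate_zero size_var_mset)
qed

lemma ideal_pow_mult_monomial_diff_mem:
  assumes sc: "simplicial_complex n \<Delta>"
    and keys: "Poly_Mapping.keys \<alpha> \<subseteq> S_vars a \<Delta>" "Poly_Mapping.keys \<beta> \<subseteq> S_vars a \<Delta>"
    and E: "eta_exponent n \<alpha> = eta_exponent n \<beta>" and deg: "mdeg \<beta> = mdeg \<alpha>"
    and g: "g \<in> ideal_pow (margin_ideal n a (\<Inter>(facets \<Delta>))) (mdeg \<alpha>)"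
  shows "g * ((\<Prod>\<sigma>\<in>#var_mset \<alpha>. xsum n a \<sigma>) - (\<Prod>\<sigma>\<in>#var_mset \<beta>. xsum n a \<sigma>))
    \<in> (I_Delta n a \<Delta> :: (nat \<Rightarrow> nat, 'k::comm_ring_1) mpoly set)"
proof -
  let ?L = "\<Inter>(facets \<Delta>)"
  interpret exchange_moves \<Delta> ?L "I_Delta n a \<Delta> :: (nat \<Rightarrow> nat, 'k) mpoly set" "xsum n a"
    by (rule exchange_moves_I_Delta[OF sc])
  have rows: "supp \<sigma> \<in> \<Delta>" if "\<sigma> \<in># var_mset \<alpha> + var_mset \<beta>" for \<sigma>
  proof -
    have "\<sigma> \<in> S_vars a \<Delta>"
      using keys that by auto
    then show ?thesis
      by (rule S_vars_supp(1)[OF sc])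
  qed
  have cols: "column (var_mset \<alpha>) j = column (var_mset \<beta>) j" for j
    by (rule S_vars_columns_eq[OF sc keys E deg])
  show ?thesis
  proof (rule ideal_pow_mult_mem[OF subspace_I_Delta g[unfolded margin_ideal_def]])
    fix hs :: "(nat \<Rightarrow> nat, 'k) mpoly list"
    assume hs: "set hs \<subseteq> xsum n a ` cells a ?L" "length hs = mdeg \<alpha>"
    have "hs \<in> lists (xsum n a ` cells a ?L)"
      using hs(1) by auto
    then obtain cs where cs: "hs = map (xsum n a) cs" "set cs \<subseteq> cells a ?L"
      unfolding lists_image by auto
    have "row_cong (mset cs + var_mset \<alpha>) (var_mset \<beta> + mset cs)"
    proof (rule row_cong_columns_eq)
      show "size (mset cs) = size (var_mset \<alpha>)" "size (var_mset \<beta>) = size (var_mset \<alpha>)"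
        using hs(2) cs(1) deg by (simp_all add: size_var_mset)
      have "supp h \<subseteq> ?L" if "h \<in> set cs" for h
        using supp_cells[of h a ?L] cs(2) that by blast
      then show "\<forall>h\<in>#mset cs. supp h \<subseteq> ?L"
        by simp
    qed (use rows cols in auto)
    then show "prod_list hs * ((\<Prod>\<sigma>\<in>#var_mset \<alpha>. xsum n a \<sigma>) - (\<Prod>\<sigma>\<in>#var_mset \<beta>. xsum n a \<sigma>))
        \<in> (I_Delta n a \<Delta> :: (nat \<Rightarrow> nat, 'k) mpoly set)"
      unfolding row_cong_def cs(1) by (simp add: prod_mset_prod_list[symmetric] algebra_simps)
  qed
qed

lemma eta_binomial_eq_zero_cases:
  assumes "eta n (Poly_Mapping.single \<alpha> c + Poly_Mapping.single \<beta> d) = (0 :: (nat \<times> nat, 'k::comm_ring_1) mpoly)"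
  shows "c = 0 \<and> d = 0 \<or> d = - c \<and> eta_exponent n \<alpha> = eta_exponent n \<beta>"
proof -
  let ?E = "eta_exponent n"
  have "Poly_Mapping.single (?E \<alpha>) c + Poly_Mapping.single (?E \<beta>) d = (0 :: (nat \<times> nat, 'k) mpoly)"
    using assms unfolding eta_def additive.add[OF additive_subst] by (simp only: eta_single[unfolded eta_def])
  then have eta: "Poly_Mapping.lookup (Poly_Mapping.single (?E \<alpha>) c + Poly_Mapping.single (?E \<beta>) d) e = 0" for e
    by simp
  show ?thesis
  proof (cases "?E \<alpha> = ?E \<beta>")
    case False
    then show ?thesis
      using eta[of "?E \<alpha>"] eta[of "?E \<beta>"] by (simp add: lookup_add lookup_single)
  next
    case True
    then show ?thesis
      using eta[of "?E \<alpha>"] by (simp add: lookup_add eq_neg_iff_add_eq_0 add.commute)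
  qed
qed

lemma ideal_pow_mult_tau_binomial_mem:
  assumes sc: "simplicial_complex n \<Delta>" and fQ: "f \<in> Q_Delta n a \<Delta>" and bin: "binomial_of_degree s f"
    and g: "g \<in> ideal_pow (margin_ideal n a (\<Inter>(facets \<Delta>))) s"
  shows "g * tau n a f \<in> (I_Delta n a \<Delta> :: (nat \<Rightarrow> nat, 'k::comm_ring_1) mpoly set)"
proof -
  obtain \<alpha> \<beta> c d where f: "f = Poly_Mapping.single \<alpha> c + Poly_Mapping.single \<beta> d"
    and deg: "mdeg \<alpha> = s" "mdeg \<beta> = s"
    using bin unfolding binomial_of_degree_def by blast
  let ?P = "\<lambda>m. (\<Prod>\<sigma>\<in>#var_mset m. xsum n a \<sigma>) :: (nat \<Rightarrow> nat, 'k) mpoly"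
  let ?E = "eta_exponent n"
  have tau_f: "tau n a f = Poly_Mapping.single 0 c * ?P \<alpha> + Poly_Mapping.single 0 d * ?P \<beta>"
    unfolding f tau_def additive.add[OF additive_subst] subst_single ..
  have "eta n (Poly_Mapping.single \<alpha> c + Poly_Mapping.single \<beta> d) = 0"
    using fQ f by (simp add: Q_Delta_def)
  then have "c = 0 \<and> d = 0 \<or> d = - c \<and> ?E \<alpha> = ?E \<beta>"
    by (rule eta_binomial_eq_zero_cases)
  then have "tau n a f = 0 \<or> (c \<noteq> 0 \<and> d = - c \<and> \<alpha> \<noteq> \<beta> \<and> ?E \<alpha> = ?E \<beta>)"
    by (cases "c = 0 \<or> \<alpha> = \<beta>") (auto simp: tau_f single_uminus)
  then show ?thesis
  proof
    assume "tau n a f = 0"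
    then show ?thesis using ring_module.subspace_0[OF subspace_I_Delta] by simp
  next
    assume c: "c \<noteq> 0 \<and> d = - c \<and> \<alpha> \<noteq> \<beta> \<and> ?E \<alpha> = ?E \<beta>"
    then have "\<alpha> \<in> Poly_Mapping.keys f" "\<beta> \<in> Poly_Mapping.keys f"
      by (auto simp: f in_keys_iff lookup_add lookup_single)
    then have keys: "Poly_Mapping.keys \<alpha> \<subseteq> S_vars a \<Delta>" "Poly_Mapping.keys \<beta> \<subseteq> S_vars a \<Delta>"
      using fQ unfolding Q_Delta_def vars_def by blast+
    have "g * (?P \<alpha> - ?P \<beta>) \<in> (I_Delta n a \<Delta> :: (nat \<Rightarrow> nat, 'k) mpoly set)"
      using ideal_pow_mult_monomial_diff_mem[OF sc keys] c deg g by simp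
    then have "Poly_Mapping.single 0 c * (g * (?P \<alpha> - ?P \<beta>)) \<in> I_Delta n a \<Delta>"
      by (rule ring_module.subspace_scale[OF subspace_I_Delta])
    moreover have "tau n a f = Poly_Mapping.single 0 c * (?P \<alpha> - ?P \<beta>)"
      using c by (simp add: tau_f single_uminus algebra_simps)
    ultimately show ?thesis
      by (simp add: ac_simps)
  qed
qed

lemma mdeg_eq_if_eta_exponent_eq:
  assumes "1 \<le> n" "eta_exponent n \<alpha> = eta_exponent n \<beta>"
  shows "mdeg \<alpha> = mdeg \<beta>"
proof -
  have "column (var_mset \<alpha>) 1 = column (var_mset \<beta>) 1"
    using column_eq_if_eta_exponent_eq[OF assms(2)] assms(1) by simp
  then have "size (column (var_mset \<alpha>) 1) = size (column (var_mset \<beta>) 1)"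
    by simp
  then have "size (var_mset \<alpha>) = size (var_mset \<beta>)"
    by (simp add: column_def)
  then show ?thesis
    by (simp add: size_var_mset)
qed

lemma eta_eq_sum_keys:
  "eta n f = (\<Sum>m\<in>Poly_Mapping.keys f. Poly_Mapping.single (eta_exponent n m) (Poly_Mapping.lookup f m))"
proof -
  have "eta n f = eta n (\<Sum>m\<in>Poly_Mapping.keys f. Poly_Mapping.single m (Poly_Mapping.lookup f m))"
    by (simp only: sum_single_lookup)
  also have "\<dots> = (\<Sum>m\<in>Poly_Mapping.keys f. eta n (Poly_Mapping.single m (Poly_Mapping.lookup f m)))"
    unfolding eta_def by (rule additive.sum[OF additive_subst])
  finally show ?thesis
    by (simp add: eta_single)
qed

lemma sum_single_fibre_eq_zero:
  assumes "eta n f = 0"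
  shows "(\<Sum>m\<in>Poly_Mapping.keys f. Poly_Mapping.single (\<rho> (eta_exponent n m)) (Poly_Mapping.lookup f m)) = 0"
proof -
  let ?E = "eta_exponent n" and ?c = "Poly_Mapping.lookup f" and ?K = "Poly_Mapping.keys f"
  have fibre_sum: "(\<Sum>m\<in>{m \<in> ?K. ?E m = e}. ?c m) = 0" for e
  proof -
    have "Poly_Mapping.lookup (eta n f) e = (\<Sum>m\<in>?K. if ?E m = e then ?c m else 0)"
      unfolding eta_eq_sum_keys lookup_sum by (rule sum.cong[OF refl]) (simp add: lookup_single when_def)
    also have "\<dots> = (\<Sum>m\<in>{m \<in> ?K. ?E m = e}. ?c m)"
      by (simp add: sum.inter_filter)
    finally show ?thesis
      using assms by simp
  qed
  have "(\<Sum>m\<in>?K. Poly_Mapping.single (\<rho> (?E m)) (?c m))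
      = (\<Sum>e\<in>?E ` ?K. \<Sum>m\<in>{m \<in> ?K. ?E m = e}. Poly_Mapping.single (\<rho> (?E m)) (?c m))"
    by (rule sum.group[symmetric]) auto
  also have "\<dots> = (\<Sum>e\<in>?E ` ?K. Poly_Mapping.single (\<rho> e) (\<Sum>m\<in>{m \<in> ?K. ?E m = e}. ?c m))"
    by (intro sum.cong refl) (simp add: additive.sum[OF additive_single])
  also have "\<dots> = 0"
    by (simp add: fibre_sum)
  finally show ?thesis .
qed

text \<open>Pair each monomial with a fixed representative of its fibre under \<open>eta\<close>.\<close>

lemma Q_Delta_sum_binomials:
  assumes n: "1 \<le> n" and fQ: "f \<in> Q_Delta n a (\<Delta> :: nat set set)"
  shows "\<exists>b. f = (\<Sum>m\<in>Poly_Mapping.keys f. b m)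
    \<and> (\<forall>m\<in>Poly_Mapping.keys f. b m \<in> Q_Delta n a \<Delta> \<and> binomial_of_degree (mdeg m) (b m))"
proof -
  let ?E = "eta_exponent n" and ?c = "Poly_Mapping.lookup f" and ?K = "Poly_Mapping.keys f"
  define rep where "rep e = (SOME m. m \<in> ?K \<and> ?E m = e)" for e
  have rep: "rep (?E m) \<in> ?K \<and> ?E (rep (?E m)) = ?E m" if "m \<in> ?K" for m
    unfolding rep_def by (rule someI[of _ m]) (use that in simp)
  define b where "b m = Poly_Mapping.single m (?c m) + Poly_Mapping.single (rep (?E m)) (- ?c m)" for m
  have "eta n f = 0"
    using fQ by (simp add: Q_Delta_def)
  then have "(\<Sum>m\<in>?K. Poly_Mapping.single (rep (?E m)) (?c m)) = 0"
    by (rule sum_single_fibre_eq_zero)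
  then have "f = (\<Sum>m\<in>?K. b m)"
    by (simp add: b_def single_uminus sum_subtractf sum_single_lookup)
  moreover have "b m \<in> Q_Delta n a \<Delta> \<and> binomial_of_degree (mdeg m) (b m)" if m: "m \<in> ?K" for m
  proof (intro conjI)
    have "mdeg (rep (?E m)) = mdeg m"
      using mdeg_eq_if_eta_exponent_eq[OF n conjunct2[OF rep[OF m]]] .
    then show "binomial_of_degree (mdeg m) (b m)"
      unfolding binomial_of_degree_def b_def
      by (intro exI[of _ m] exI[of _ "rep (?E m)"] exI[of _ "?c m"] exI[of _ "- ?c m"]) simp
    have "Poly_Mapping.keys (b m) \<subseteq> Poly_Mapping.keys (Poly_Mapping.single m (?c m))
        \<union> Poly_Mapping.keys (Poly_Mapping.single (rep (?E m)) (- ?c m))"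
      unfolding b_def by (rule keys_add)
    also have "\<dots> \<subseteq> ?K"
      using m rep[OF m] by auto
    finally have "vars (b m) \<subseteq> S_vars a \<Delta>"
      using fQ unfolding Q_Delta_def vars_def by blast
    moreover have "eta n (b m) = 0"
      unfolding b_def eta_def additive.add[OF additive_subst]
      by (simp only: eta_single[unfolded eta_def]) (simp add: rep[OF m] flip: single_add)
    ultimately show "b m \<in> Q_Delta n a \<Delta>"
      by (simp add: Q_Delta_def)
  qed
  ultimately show ?thesis by blast
qed

lemma tau_Q_Delta_mem_saturation:
  assumes n: "1 \<le> n" and sc: "simplicial_complex n \<Delta>" and fQ: "f \<in> Q_Delta n a \<Delta>"
  shows "tau n a f \<in> saturation (I_Delta n a \<Delta> :: (nat \<Rightarrow> nat, 'k::comm_ring_1) mpoly set) (xsum n a (\<lambda>_. 0))"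
proof -
  obtain b where f: "f = (\<Sum>m\<in>Poly_Mapping.keys f. b m)"
    and b: "\<forall>m\<in>Poly_Mapping.keys f. b m \<in> Q_Delta n a \<Delta> \<and> binomial_of_degree (mdeg m) (b m)"
    using Q_Delta_sum_binomials[OF n fQ] by blast
  let ?x0 = "xsum n a (\<lambda>_. 0) :: (nat \<Rightarrow> nat, 'k) mpoly"
  define N where "N = (\<Sum>m\<in>Poly_Mapping.keys f. mdeg m)"
  have terms: "?x0 ^ N * tau n a (b m) \<in> I_Delta n a \<Delta>" if m: "m \<in> Poly_Mapping.keys f" for m
  proof -
    have "?x0 ^ mdeg m * tau n a (b m) \<in> I_Delta n a \<Delta>"
      using ideal_pow_mult_tau_binomial_mem[OF sc _ _ power_mem_ideal_pow[OF xsum_zero_mem_margin_ideal[OF sc]]]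
        b m by blast
    then have "?x0 ^ (N - mdeg m) * (?x0 ^ mdeg m * tau n a (b m)) \<in> I_Delta n a \<Delta>"
      by (rule ring_module.subspace_scale[OF subspace_I_Delta])
    moreover have "mdeg m \<le> N"
      unfolding N_def by (rule member_le_sum) (use m in auto)
    ultimately show ?thesis
      by (simp add: mult.assoc[symmetric] flip: power_add)
  qed
  have "tau n a f = (\<Sum>m\<in>Poly_Mapping.keys f. tau n a (b m))"
    unfolding tau_def by (subst arg_cong[OF f]) (rule additive.sum[OF additive_subst])
  then have "?x0 ^ N * tau n a f = (\<Sum>m\<in>Poly_Mapping.keys f. ?x0 ^ N * tau n a (b m))"
    by (simp add: sum_distrib_left)
  also have "\<dots> \<in> I_Delta n a \<Delta>"
    using terms by (intro ring_module.subspace_sum[OF subspace_I_Delta])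
  finally have "?x0 ^ N * tau n a f \<in> I_Delta n a \<Delta>" .
  then show ?thesis
    unfolding saturation_def by blast
qed

theorem proposition4p3:
  fixes n :: nat and a :: "nat \<Rightarrow> nat" and \<Delta> :: "nat set set"
    and f :: "(nat \<Rightarrow> nat, 'k::field) mpoly" and s :: nat
  assumes "n \<ge> 1"
    and "\<forall>j\<in>{1..n}. a j \<ge> 1"
    and "simplicial_complex n \<Delta>"
    and "f \<in> Q_Delta n a \<Delta>"
    and "binomial_of_degree s f"
  shows "(\<forall>g\<in>ideal_pow (margin_ideal n a (\<Inter>(facets \<Delta>))) s. g * tau n a f \<in> I_Delta n a \<Delta>)
       \<and> tau n a f \<in> ideal_quot (I_Delta n a \<Delta>) (ideal_pow (margin_ideal n a (\<Inter>(facets \<Delta>))) s)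
       \<and> tau n a ` (Q_Delta n a \<Delta> :: (nat \<Rightarrow> nat, 'k) mpoly set)
           \<subseteq> saturation (I_Delta n a \<Delta>) (xsum n a (\<lambda>_. 0))"
proof -
  have "\<forall>g\<in>ideal_pow (margin_ideal n a (\<Inter>(facets \<Delta>))) s. g * tau n a f \<in> I_Delta n a \<Delta>"
    using ideal_pow_mult_tau_binomial_mem[OF assms(3-5)] by blast
  moreover have "tau n a ` (Q_Delta n a \<Delta> :: (nat \<Rightarrow> nat, 'k) mpoly set)
      \<subseteq> saturation (I_Delta n a \<Delta>) (xsum n a (\<lambda>_. 0))"
    using tau_Q_Delta_mem_saturation[OF assms(1,3)] by blast
  ultimately show ?thesis
    unfolding ideal_quot_def by blast
qed

end
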